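(* Let $\Gamma:[0,1]\to\mathcal{D}$ be a continuous path, $s,t\in[0,1]$, and $H\le\Gamma_s$ a subgroup. The following are equivalent: (1) $J_{s,t}|_H$ is finite valued; (2) $J_{s,t}|_H$ is an injective homomorphism $H\to\mathrm{PSL}_2\mathbb{C}$; (3) $t\in I^s_\psi$ for all $\psi\in H$.
   Context: $\mathcal{D}$: discrete torsion-free subgroups of $\mathrm{PSL}_2\mathbb{C}$ with the Chabauty topology ($\Gamma_n\to\Gamma$ iff accumulation points of sequences $\psi_n\in\Gamma_n$ lie in $\Gamma$ and each element of $\Gamma$ is a limit of some $\psi_n\in\Gamma_n$). For a path $\Gamma$ with $\Gamma_t=\Gamma(t)$, $s\in[0,1]$, $\psi\in\Gamma_s$: a $\Gamma$-path through $\psi$ based at $s$ is a continuous $j:I\to\mathrm{PSL}_2\mathbb{C}$, $I\subseteq[0,1]$ an interval containing $s$, with $j(t)\in\Gamma_t$ for $t\in I$ and $j(s)=\psi$. Any two such paths agree on the intersection of their domains, so there is a maximal such interval $I^s_\psi$, carrying the path $j^s_\psi$. With $\overline{\mathrm{PSL}_2\mathbb{C}}=\mathrm{PSL}_2\mathbb{C}\cup\{\infty\}$, define $J_{s,t}:\Gamma_s\to\overline{\mathrm{PSL}_2\mathbb{C}}$ by $J_{s,t}(\psi)=j^s_\psi(t)$ if $t\in I^s_\psi$ and $\infty$ otherwise. A map into $\overline{\mathrm{PSL}_2\mathbb{C}}$ is finite valued if its image lies in $\mathrm{PSL}_2\mathbb{C}$. *)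

theory Defs
  imports "HOL-Analysis.Analysis"
begin

definition SL2C :: "(complex^2^2) set" where
  "SL2C = {A. det A = 1}"

typedef psl2c = "{{A, - A} | A :: complex^2^2. det A = 1}"
  morphisms Rep_psl Abs_psl
  by (rule exI[of _ "{mat 1, - mat 1}"]) (auto simp: det_I)

definition psl_of :: "complex^2^2 \<Rightarrow> psl2c" where
  "psl_of A = Abs_psl {A, - A}"

definition psl_rep :: "psl2c \<Rightarrow> complex^2^2" where
  "psl_rep x = (SOME A. A \<in> Rep_psl x)"

definition psl_one :: psl2c where
  "psl_one = psl_of (mat 1)"

definition psl_mult :: "psl2c \<Rightarrow> psl2c \<Rightarrow> psl2c" where
  "psl_mult x y = psl_of (psl_rep x ** psl_rep y)"

definition psl_inv :: "psl2c \<Rightarrow> psl2c" where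
  "psl_inv x = psl_of (matrix_inv (psl_rep x))"

definition psl_pow :: "psl2c \<Rightarrow> nat \<Rightarrow> psl2c" where
  "psl_pow x n = (psl_mult x ^^ n) psl_one"

definition psl_top :: "psl2c topology" where
  "psl_top = topology (\<lambda>U. openin (top_of_set SL2C) {A \<in> SL2C. psl_of A \<in> U})"

definition psl_subgroup :: "psl2c set \<Rightarrow> bool" where
  "psl_subgroup G \<longleftrightarrow> psl_one \<in> G \<and> (\<forall>x\<in>G. \<forall>y\<in>G. psl_mult x y \<in> G) \<and> (\<forall>x\<in>G. psl_inv x \<in> G)"

definition psl_discrete :: "psl2c set \<Rightarrow> bool" where
  "psl_discrete G \<longleftrightarrow> (\<forall>x\<in>G. \<exists>U. openin psl_top U \<and> U \<inter> G = {x})"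

definition psl_torsion_free :: "psl2c set \<Rightarrow> bool" where
  "psl_torsion_free G \<longleftrightarrow> (\<forall>x\<in>G. \<forall>n>0. psl_pow x n = psl_one \<longrightarrow> x = psl_one)"

definition DTF :: "psl2c set set" where
  "DTF = {G. psl_subgroup G \<and> psl_discrete G \<and> psl_torsion_free G}"

definition chabauty_lim :: "(nat \<Rightarrow> psl2c set) \<Rightarrow> psl2c set \<Rightarrow> bool" where
  "chabauty_lim Gs G \<longleftrightarrow>
     (\<forall>\<psi>. (\<forall>n. \<psi> n \<in> Gs n) \<longrightarrow>
        (\<forall>x. (\<exists>r. strict_mono r \<and> limitin psl_top (\<psi> \<circ> r) x sequentially) \<longrightarrow> x \<in> G)) \<and>
     (\<forall>x\<in>G. \<exists>\<psi>. (\<forall>n. \<psi> n \<in> Gs n) \<and> limitin psl_top \<psi> x sequentially)"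

text \<open>A continuous path [0,1] -> D (the Chabauty topology is metrizable, so sequential
  continuity is continuity).\<close>
definition D_path :: "(real \<Rightarrow> psl2c set) \<Rightarrow> bool" where
  "D_path \<Gamma> \<longleftrightarrow> (\<forall>t\<in>{0..1}. \<Gamma> t \<in> DTF) \<and>
     (\<forall>t\<in>{0..1}. \<forall>ts. (\<forall>n. ts n \<in> {0..1}) \<and> ts \<longlonglongrightarrow> t \<longrightarrow> chabauty_lim (\<Gamma> \<circ> ts) (\<Gamma> t))"

definition Gamma_path :: "(real \<Rightarrow> psl2c set) \<Rightarrow> real \<Rightarrow> psl2c \<Rightarrow> real set \<Rightarrow> (real \<Rightarrow> psl2c) \<Rightarrow> bool" where
  "Gamma_path \<Gamma> s \<psi> I j \<longleftrightarrow> is_interval I \<and> I \<subseteq> {0..1} \<and> s \<in> I \<and>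
     continuous_map (top_of_set I) psl_top j \<and> (\<forall>t\<in>I. j t \<in> \<Gamma> t) \<and> j s = \<psi>"

definition Imax :: "(real \<Rightarrow> psl2c set) \<Rightarrow> real \<Rightarrow> psl2c \<Rightarrow> real set" where
  "Imax \<Gamma> s \<psi> = \<Union>{I. \<exists>j. Gamma_path \<Gamma> s \<psi> I j}"

text \<open>None plays the role of the point at infinity.\<close>
definition J :: "(real \<Rightarrow> psl2c set) \<Rightarrow> real \<Rightarrow> real \<Rightarrow> psl2c \<Rightarrow> psl2c option" where
  "J \<Gamma> s t \<psi> = (if t \<in> Imax \<Gamma> s \<psi>
      then Some (THE g. \<exists>I j. Gamma_path \<Gamma> s \<psi> I j \<and> t \<in> I \<and> j t = g)
      else None)"

end

theory Submission
  imports Defs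
begin

text \<open>
  The equivalence of (1) and (3) is the definition of \<open>J\<close>. For (1) \<Rightarrow> (2), \<open>\<Gamma>\<close>-paths can be
  multiplied and inverted pointwise, so everything reduces to uniqueness: a \<open>\<Gamma>\<close>-path through the
  identity stays at the identity. The set of times where it is the identity is closed, and it is
  open because the groups \<open>\<Gamma>\<^sub>u\<close> are uniformly discrete near the identity for \<open>u\<close> near any fixed
  time \<open>t\<close>. The latter holds because otherwise there are nontrivial \<open>g\<^sub>n \<in> \<Gamma>(u\<^sub>n)\<close> with
  \<open>u\<^sub>n \<rightarrow> t\<close> and \<open>g\<^sub>n \<rightarrow> 1\<close>; since each \<open>\<Gamma>(u\<^sub>n)\<close> is discrete and torsion-free, some power of \<open>g\<^sub>n\<close>
  leaves the \<open>\<rho>\<close>-ball about the identity, and the first such powers accumulate, by the Chabauty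
  condition, at an element of \<open>\<Gamma>\<^sub>t\<close> at distance exactly \<open>\<rho>\<close> from the identity, which
  discreteness of \<open>\<Gamma>\<^sub>t\<close> rules out for small \<open>\<rho>\<close>.
\<close>

section \<open>The group PSL(2,C)\<close>

lemma Rep_psl_eq: "Rep_psl x = {psl_rep x, - psl_rep x}"
proof -
  obtain A where A: "Rep_psl x = {A, - A}"
    using Rep_psl[of x] by auto
  have "psl_rep x \<in> {A, - A}"
    unfolding psl_rep_def A by (rule someI[of _ A]) simp
  then consider "psl_rep x = A" | "psl_rep x = - A"
    by blast
  then show ?thesis
    by cases (simp_all add: A insert_commute)
qed

lemma mem_Rep_psl_iff: "X \<in> Rep_psl x \<longleftrightarrow> X = psl_rep x \<or> X = - psl_rep x"
  by (simp add: Rep_psl_eq)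

lemma psl_rep_mem_Rep_psl: "psl_rep x \<in> Rep_psl x"
  by (simp add: mem_Rep_psl_iff)

lemma det_uminus_2: "det (- A :: 'a::comm_ring_1^2^2) = det A"
  by (simp add: det_2)

lemma det_Rep_psl: "X \<in> Rep_psl x \<Longrightarrow> det X = 1"
  using Rep_psl[of x] by (auto simp: det_uminus_2)

lemma Rep_psl_psl_of: "det A = 1 \<Longrightarrow> Rep_psl (psl_of A) = {A, - A}"
  unfolding psl_of_def by (rule Abs_psl_inverse) auto

lemma mem_Rep_psl_psl_of: "det A = 1 \<Longrightarrow> A \<in> Rep_psl (psl_of A)"
  by (simp add: Rep_psl_psl_of)

lemma psl_of_Rep_psl: "X \<in> Rep_psl x \<Longrightarrow> psl_of X = x"
  unfolding psl_of_def mem_Rep_psl_iff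
  by (metis Rep_psl_eq Rep_psl_inverse insert_commute minus_minus)

lemma det_psl_rep: "det (psl_rep x) = 1"
  by (rule det_Rep_psl[OF psl_rep_mem_Rep_psl])

lemma psl_of_psl_rep: "psl_of (psl_rep x) = x"
  by (rule psl_of_Rep_psl[OF psl_rep_mem_Rep_psl])

lemma matrix_mul_uminus_left: "(- A) ** B = - (A ** (B :: 'a::ring_1^'n^'m))"
  by (simp add: matrix_matrix_mult_def vec_eq_iff sum_negf)

lemma matrix_mul_uminus_right: "A ** (- B) = - (A ** (B :: 'a::ring_1^'n^'m))"
  by (simp add: matrix_matrix_mult_def vec_eq_iff sum_negf)

lemma psl_mult_Rep_psl: "X \<in> Rep_psl x \<Longrightarrow> Y \<in> Rep_psl y \<Longrightarrow> psl_mult x y = psl_of (X ** Y)"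
  unfolding psl_mult_def mem_Rep_psl_iff psl_of_def
  by (auto simp: matrix_mul_uminus_left matrix_mul_uminus_right insert_commute)

definition adjugate2 :: "'a::comm_ring_1^2^2 \<Rightarrow> 'a^2^2" where
  "adjugate2 A = (\<chi> i j. if i = 1 \<and> j = 1 then A$2$2 else if i = 1 \<and> j = 2 then - A$1$2
              else if i = 2 \<and> j = 1 then - A$2$1 else A$1$1)"

lemma matrix_mul_adjugate2: "det A = 1 \<Longrightarrow> A ** adjugate2 A = mat 1"
  by (auto simp: det_2 adjugate2_def matrix_matrix_mult_def vec_eq_iff sum_2 mat_def forall_2 algebra_simps)

lemma adjugate2_matrix_mul: "det A = 1 \<Longrightarrow> adjugate2 A ** A = mat 1"
  by (auto simp: det_2 adjugate2_def matrix_matrix_mult_def vec_eq_iff sum_2 mat_def forall_2 algebra_simps)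

lemma det_adjugate2: "det (adjugate2 A) = det A"
  by (simp add: det_2 adjugate2_def)

lemma adjugate2_uminus: "adjugate2 (- A) = - adjugate2 A"
  by (auto simp: adjugate2_def vec_eq_iff)

lemma matrix_inv_unique:
  fixes A :: "'a::semiring_1^'n^'n"
  assumes "A ** B = mat 1" and "B ** A = mat 1"
  shows "matrix_inv A = B"
proof -
  have inv: "A ** matrix_inv A = mat 1 \<and> matrix_inv A ** A = mat 1"
    unfolding matrix_inv_def by (rule someI[of _ B]) (use assms in auto)
  then have "matrix_inv A = matrix_inv A ** (A ** B)"
    using assms by simp
  also have "\<dots> = B"
    using inv by (simp add: matrix_mul_assoc)
  finally show ?thesis .
qed

lemma psl_of_uminus: "psl_of (- A) = psl_of A"
  unfolding psl_of_def by (simp add: insert_commute)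

lemma psl_inv_Rep_psl:
  assumes "X \<in> Rep_psl x"
  shows "psl_inv x = psl_of (adjugate2 X)"
proof -
  have "matrix_inv (psl_rep x) = adjugate2 (psl_rep x)"
    by (intro matrix_inv_unique matrix_mul_adjugate2 adjugate2_matrix_mul det_psl_rep)
  then show ?thesis
    using assms by (auto simp: psl_inv_def mem_Rep_psl_iff adjugate2_uminus psl_of_uminus)
qed

lemma mat_1_mem_Rep_psl_one: "mat 1 \<in> Rep_psl psl_one"
  by (simp add: psl_one_def mem_Rep_psl_psl_of)

lemma mem_Rep_psl_mult: "X \<in> Rep_psl x \<Longrightarrow> Y \<in> Rep_psl y \<Longrightarrow> X ** Y \<in> Rep_psl (psl_mult x y)"
  by (simp add: psl_mult_Rep_psl det_Rep_psl det_mul mem_Rep_psl_psl_of)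

lemma psl_mult_assoc: "psl_mult (psl_mult x y) z = psl_mult x (psl_mult y z)"
proof -
  obtain X Y Z where R: "X \<in> Rep_psl x" "Y \<in> Rep_psl y" "Z \<in> Rep_psl z"
    using psl_rep_mem_Rep_psl by blast
  have "psl_mult (psl_mult x y) z = psl_of (X ** (Y ** Z))"
    using R unfolding matrix_mul_assoc by (intro psl_mult_Rep_psl mem_Rep_psl_mult)
  also have "\<dots> = psl_mult x (psl_mult y z)"
    by (rule psl_mult_Rep_psl [symmetric]) (use R in \<open>simp_all add: mem_Rep_psl_mult\<close>)
  finally show ?thesis .
qed

lemma psl_mult_one_left: "psl_mult psl_one x = x"
  by (metis psl_mult_Rep_psl mat_1_mem_Rep_psl_one psl_rep_mem_Rep_psl matrix_mul_lid psl_of_Rep_psl)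

lemma psl_mult_one_right: "psl_mult x psl_one = x"
  by (metis psl_mult_Rep_psl mat_1_mem_Rep_psl_one psl_rep_mem_Rep_psl matrix_mul_rid psl_of_Rep_psl)

lemma adjugate2_mem_Rep_psl_inv: "X \<in> Rep_psl x \<Longrightarrow> adjugate2 X \<in> Rep_psl (psl_inv x)"
  by (simp add: psl_inv_Rep_psl det_adjugate2 det_Rep_psl mem_Rep_psl_psl_of)

lemma psl_mult_inv_right: "psl_mult x (psl_inv x) = psl_one"
  using psl_mult_Rep_psl[OF psl_rep_mem_Rep_psl adjugate2_mem_Rep_psl_inv[OF psl_rep_mem_Rep_psl], of x x]
    matrix_mul_adjugate2[OF det_psl_rep]
  by (simp add: psl_one_def)

lemma psl_mult_inv_left: "psl_mult (psl_inv x) x = psl_one"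
  using psl_mult_Rep_psl[OF adjugate2_mem_Rep_psl_inv[OF psl_rep_mem_Rep_psl] psl_rep_mem_Rep_psl, of x x]
    adjugate2_matrix_mul[OF det_psl_rep]
  by (simp add: psl_one_def)

lemma psl_mult_inv_eq_one_imp_eq: "psl_mult x (psl_inv y) = psl_one \<Longrightarrow> x = y"
  by (metis psl_mult_assoc psl_mult_inv_left psl_mult_one_left psl_mult_one_right)

lemma psl_pow_add: "psl_pow x (a + b) = psl_mult (psl_pow x a) (psl_pow x b)"
  by (induction a) (auto simp: psl_pow_def psl_mult_one_left psl_mult_assoc)

section \<open>PSL(2,C) as a metric space\<close>

text \<open>The distance of the nearest lifts to SL(2,C) metrizes the quotient topology \<open>psl_top\<close>
  (lemma \<open>psl_top_eq_euclidean\<close>), so all topology below is done with sequences and \<open>dist\<close>.\<close>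

instantiation psl2c :: metric_space
begin

definition dist_psl2c :: "psl2c \<Rightarrow> psl2c \<Rightarrow> real" where
  "dist_psl2c x y = min (norm (psl_rep x - psl_rep y)) (norm (psl_rep x + psl_rep y))"

definition uniformity_psl2c :: "(psl2c \<times> psl2c) filter" where
  "uniformity_psl2c = (INF e\<in>{0 <..}. principal {(x, y). dist x y < e})"

definition open_psl2c :: "psl2c set \<Rightarrow> bool" where
  "open_psl2c U \<longleftrightarrow> (\<forall>x\<in>U. eventually (\<lambda>(x', y). x' = x \<longrightarrow> y \<in> U) uniformity)"

lemma norm_uminus_diff: "norm (- a - b) = norm (a + b :: 'a::real_normed_vector)"
  using norm_minus_cancel[of "a + b"] by (simp only: minus_add_distrib diff_conv_add_uminus)

lemma dist_psl_cases:
  assumes "X \<in> Rep_psl x" and "Y \<in> Rep_psl y"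
  shows "norm (X - Y) = norm (psl_rep x - psl_rep y) \<or> norm (X - Y) = norm (psl_rep x + psl_rep y)"
  using assms unfolding mem_Rep_psl_iff
  by (elim disjE) (simp_all add: norm_uminus_diff norm_minus_commute add.commute)

lemma dist_psl_le_norm:
  assumes "X \<in> Rep_psl x" and "Y \<in> Rep_psl y"
  shows "dist x y \<le> norm (X - Y)"
  using dist_psl_cases[OF assms] unfolding dist_psl2c_def min_le_iff_disj by auto

lemma dist_psl_attained:
  assumes "X \<in> Rep_psl x"
  shows "\<exists>Y\<in>Rep_psl y. dist x y = norm (X - Y)"
proof -
  let ?x = "psl_rep x" and ?y = "psl_rep y"
  have Y: "?y \<in> Rep_psl y" "- ?y \<in> Rep_psl y"
    by (simp_all add: mem_Rep_psl_iff)
  have norms: "norm (?x - - ?y) = norm (?x + ?y)" "norm (- ?x - ?y) = norm (?x + ?y)"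
    "norm (- ?x - - ?y) = norm (?x - ?y)"
    by (simp_all add: norm_uminus_diff norm_minus_commute add.commute)
  have "X = ?x \<or> X = - ?x"
    using assms mem_Rep_psl_iff by blast
  then show ?thesis
    using Y norms unfolding dist_psl2c_def min_def
    by (cases "norm (?x - ?y) \<le> norm (?x + ?y)") (metis diff_self)+
qed

instance
proof
  fix x y z :: psl2c
  show "dist x y = 0 \<longleftrightarrow> x = y"
  proof
    assume "dist x y = 0"
    then obtain Y where "Y \<in> Rep_psl y" "psl_rep x = Y"
      using dist_psl_attained[OF psl_rep_mem_Rep_psl[of x], of y] by auto
    then show "x = y"
      using psl_of_Rep_psl psl_rep_mem_Rep_psl by metis
  qed (simp add: dist_psl2c_def)
  obtain X where X: "X \<in> Rep_psl x" "dist z x = norm (psl_rep z - X)"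
    using dist_psl_attained[OF psl_rep_mem_Rep_psl] by blast
  obtain Y where Y: "Y \<in> Rep_psl y" "dist z y = norm (psl_rep z - Y)"
    using dist_psl_attained[OF psl_rep_mem_Rep_psl] by blast
  have "dist x y \<le> norm (X - Y)"
    using X(1) Y(1) by (rule dist_psl_le_norm)
  also have "\<dots> \<le> norm (X - psl_rep z) + norm (Y - psl_rep z)"
    using norm_triangle_ineq4[of "X - psl_rep z" "Y - psl_rep z"] by simp
  also have "\<dots> = dist x z + dist y z"
    using X(2) Y(2) by (simp add: dist_psl2c_def norm_minus_commute add.commute)
  finally show "dist x y \<le> dist x z + dist y z" .
qed (simp_all add: uniformity_psl2c_def open_psl2c_def)

end

lemma dist_psl_of_le: "det A = 1 \<Longrightarrow> det B = 1 \<Longrightarrow> dist (psl_of A) (psl_of B) \<le> norm (A - B)"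
  by (simp add: dist_psl_le_norm mem_Rep_psl_psl_of)

lemma openin_psl_top: "openin psl_top U \<longleftrightarrow> openin (top_of_set SL2C) {A \<in> SL2C. psl_of A \<in> U}"
proof -
  have "istopology (\<lambda>U. openin (top_of_set SL2C) {A \<in> SL2C. psl_of A \<in> U})"
    unfolding istopology_def
  proof (intro conjI allI impI)
    fix S T :: "psl2c set"
    assume "openin (top_of_set SL2C) {A \<in> SL2C. psl_of A \<in> S}"
      and "openin (top_of_set SL2C) {A \<in> SL2C. psl_of A \<in> T}"
    then have "openin (top_of_set SL2C) ({A \<in> SL2C. psl_of A \<in> S} \<inter> {A \<in> SL2C. psl_of A \<in> T})"
      by blast
    then show "openin (top_of_set SL2C) {A \<in> SL2C. psl_of A \<in> S \<inter> T}"
      by (simp add: Collect_conj_eq Int_assoc Int_left_commute conj_commute)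
  next
    fix K :: "psl2c set set"
    assume "\<forall>S\<in>K. openin (top_of_set SL2C) {A \<in> SL2C. psl_of A \<in> S}"
    then have "openin (top_of_set SL2C) (\<Union>S\<in>K. {A \<in> SL2C. psl_of A \<in> S})"
      by blast
    moreover have "(\<Union>S\<in>K. {A \<in> SL2C. psl_of A \<in> S}) = {A \<in> SL2C. psl_of A \<in> \<Union>K}"
      by auto
    ultimately show "openin (top_of_set SL2C) {A \<in> SL2C. psl_of A \<in> \<Union>K}"
      by simp
  qed
  then show ?thesis
    unfolding psl_top_def by (simp add: topology_inverse')
qed

lemma psl_top_eq_euclidean: "psl_top = euclidean"
proof (rule topology_eq[THEN iffD2], intro allI iffI)
  fix U :: "psl2c set"
  assume "openin psl_top U"
  then have U: "openin (top_of_set SL2C) {A \<in> SL2C. psl_of A \<in> U}"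
    by (simp add: openin_psl_top)
  show "openin euclidean U"
    unfolding open_openin[symmetric] open_dist
  proof
    fix x assume "x \<in> U"
    then have "psl_rep x \<in> {A \<in> SL2C. psl_of A \<in> U}"
      by (simp add: SL2C_def det_psl_rep psl_of_psl_rep)
    then obtain e where e: "e > 0" "\<And>B. B \<in> SL2C \<Longrightarrow> dist B (psl_rep x) < e \<Longrightarrow> psl_of B \<in> U"
      using U unfolding openin_euclidean_subtopology_iff by blast
    have "y \<in> U" if "dist y x < e" for y
    proof -
      obtain Y where "Y \<in> Rep_psl y" "dist x y = norm (psl_rep x - Y)"
        using dist_psl_attained psl_rep_mem_Rep_psl by blast
      then show "y \<in> U"
        using e(2)[of Y] that psl_of_Rep_psl[of Y y]
        by (simp add: SL2C_def det_Rep_psl dist_commute dist_norm norm_minus_commute)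
    qed
    then show "\<exists>e>0. \<forall>y. dist y x < e \<longrightarrow> y \<in> U"
      using e(1) by blast
  qed
next
  fix U :: "psl2c set"
  assume "openin euclidean U"
  then have U: "open U"
    by simp
  show "openin psl_top U"
    unfolding openin_psl_top openin_euclidean_subtopology_iff
  proof (intro conjI ballI)
    fix A assume A: "A \<in> {A \<in> SL2C. psl_of A \<in> U}"
    then obtain e where e: "e > 0" "\<And>y. dist y (psl_of A) < e \<Longrightarrow> y \<in> U"
      using U unfolding open_dist by blast
    have "B \<in> {A \<in> SL2C. psl_of A \<in> U}" if "B \<in> SL2C" "dist B A < e" for B
      using that A e(2) dist_psl_of_le[of B A] by (auto simp: SL2C_def dist_norm)
    then show "\<exists>e>0. \<forall>B\<in>SL2C. dist B A < e \<longrightarrow> B \<in> {A \<in> SL2C. psl_of A \<in> U}"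
      using e(1) by blast
  qed auto
qed

section \<open>Continuity of the group operations\<close>

lemma tendsto_lift_Rep_psl:
  assumes "(f \<longlongrightarrow> a) F"
  obtains G where "\<And>x. G x \<in> Rep_psl (f x)" and "(G \<longlongrightarrow> psl_rep a) F"
proof -
  define G where "G x = (SOME Y. Y \<in> Rep_psl (f x) \<and> dist a (f x) = norm (psl_rep a - Y))" for x
  have G: "G x \<in> Rep_psl (f x) \<and> dist a (f x) = norm (psl_rep a - G x)" for x
    unfolding G_def by (rule someI_ex) (use dist_psl_attained[OF psl_rep_mem_Rep_psl] in blast)
  have "((\<lambda>x. dist (f x) a) \<longlongrightarrow> 0) F"
    using assms by (rule tendsto_dist_iff[THEN iffD1])
  moreover have "dist (f x) a = dist (G x) (psl_rep a)" for x
    using G[of x] by (simp add: dist_commute dist_norm)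
  ultimately have "((\<lambda>x. dist (G x) (psl_rep a)) \<longlongrightarrow> 0) F"
    by simp
  then have "(G \<longlongrightarrow> psl_rep a) F"
    by (rule tendsto_dist_iff[THEN iffD2])
  with G show ?thesis
    using that by blast
qed

lemma tendsto_psl_of:
  assumes "(G \<longlongrightarrow> A) F" and "\<And>x. det (G x) = 1" and "det A = 1"
  shows "((\<lambda>x. psl_of (G x)) \<longlongrightarrow> psl_of A) F"
proof -
  have lim: "((\<lambda>x. norm (G x - A)) \<longlongrightarrow> 0) F"
    using assms(1) tendsto_dist_iff[of G A F] by (simp add: dist_norm)
  have le: "eventually (\<lambda>x. dist (psl_of (G x)) (psl_of A) \<le> norm (G x - A)) F"
    using assms(2,3) dist_psl_of_le by (simp add: always_eventually)
  have "((\<lambda>x. dist (psl_of (G x)) (psl_of A)) \<longlongrightarrow> 0) F"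
    by (rule tendsto_sandwich[OF always_eventually le tendsto_const lim]) simp
  then show ?thesis
    by (rule tendsto_dist_iff[THEN iffD2])
qed

lemma tendsto_adjugate2 [tendsto_intros]:
  fixes G :: "'b \<Rightarrow> 'a::{real_normed_field,comm_ring_1}^2^2"
  assumes "(G \<longlongrightarrow> A) F"
  shows "((\<lambda>x. adjugate2 (G x)) \<longlongrightarrow> adjugate2 A) F"
proof (intro vec_tendstoI)
  fix i j :: 2
  have entries: "((\<lambda>x. G x $ k $ l) \<longlongrightarrow> A $ k $ l) F" for k l
    by (intro tendsto_vec_nth assms)
  have "i = 1 \<or> i = 2" "j = 1 \<or> j = 2"
    using exhaust_2 by auto
  then show "((\<lambda>x. adjugate2 (G x) $ i $ j) \<longlongrightarrow> adjugate2 A $ i $ j) F"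
    by (auto simp: adjugate2_def intro: tendsto_minus entries)
qed

lemma tendsto_psl_mult [tendsto_intros]:
  assumes "(f \<longlongrightarrow> a) F" and "(g \<longlongrightarrow> b) F"
  shows "((\<lambda>x. psl_mult (f x) (g x)) \<longlongrightarrow> psl_mult a b) F"
proof -
  obtain G where G: "\<And>x. G x \<in> Rep_psl (f x)" "(G \<longlongrightarrow> psl_rep a) F"
    using assms(1) by (rule tendsto_lift_Rep_psl) blast
  obtain H where H: "\<And>x. H x \<in> Rep_psl (g x)" "(H \<longlongrightarrow> psl_rep b) F"
    using assms(2) by (rule tendsto_lift_Rep_psl) blast
  have "((\<lambda>x. psl_of (G x ** H x)) \<longlongrightarrow> psl_of (psl_rep a ** psl_rep b)) F"
  proof (rule tendsto_psl_of)
    show "((\<lambda>x. G x ** H x) \<longlongrightarrow> psl_rep a ** psl_rep b) F"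
      unfolding matrix_matrix_mult_def by (intro tendsto_intros G(2) H(2))
  qed (simp_all add: det_mul det_Rep_psl[OF G(1)] det_Rep_psl[OF H(1)] det_psl_rep)
  moreover have "psl_mult (f x) (g x) = psl_of (G x ** H x)" for x
    using G(1) H(1) by (rule psl_mult_Rep_psl)
  ultimately show ?thesis
    by (simp add: psl_mult_def)
qed

lemma tendsto_psl_inv [tendsto_intros]:
  assumes "(f \<longlongrightarrow> a) F"
  shows "((\<lambda>x. psl_inv (f x)) \<longlongrightarrow> psl_inv a) F"
proof -
  obtain G where G: "\<And>x. G x \<in> Rep_psl (f x)" "(G \<longlongrightarrow> psl_rep a) F"
    using assms by (rule tendsto_lift_Rep_psl) blast
  have "((\<lambda>x. psl_of (adjugate2 (G x))) \<longlongrightarrow> psl_of (adjugate2 (psl_rep a))) F"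
    by (rule tendsto_psl_of[OF tendsto_adjugate2[OF G(2)]])
       (simp_all add: det_adjugate2 det_Rep_psl[OF G(1)] det_psl_rep)
  moreover have "psl_inv (f x) = psl_of (adjugate2 (G x))" for x
    using G(1) by (rule psl_inv_Rep_psl)
  ultimately show ?thesis
    using psl_inv_Rep_psl[OF psl_rep_mem_Rep_psl[of a]] by simp
qed

lemma continuous_on_psl_mult:
  "continuous_on K f \<Longrightarrow> continuous_on K g \<Longrightarrow> continuous_on K (\<lambda>x. psl_mult (f x) (g x))"
  unfolding continuous_on_def by (auto intro: tendsto_psl_mult)

lemma continuous_on_psl_inv: "continuous_on K f \<Longrightarrow> continuous_on K (\<lambda>x. psl_inv (f x))"
  unfolding continuous_on_def by (auto intro: tendsto_psl_inv)

lemma psl_bounded_seq_has_convergent_subseq: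
  fixes x :: "nat \<Rightarrow> psl2c"
  assumes "\<And>n. dist (x n) psl_one \<le> r"
  obtains l \<sigma> where "strict_mono \<sigma>" and "(x \<circ> \<sigma>) \<longlonglongrightarrow> l"
proof -
  define X where "X n = (SOME Y. Y \<in> Rep_psl (x n) \<and> dist psl_one (x n) = norm (mat 1 - Y))" for n
  have X: "X n \<in> Rep_psl (x n) \<and> dist psl_one (x n) = norm (mat 1 - X n)" for n
    unfolding X_def by (rule someI_ex) (use dist_psl_attained[OF mat_1_mem_Rep_psl_one] in blast)
  have "norm (X n) \<le> norm (mat 1 :: complex^2^2) + r" for n
    using norm_triangle_sub[of "X n" "mat 1"] X[of n] assms[of n]
    by (simp add: dist_commute norm_minus_commute)
  then have "bounded (range X)"
    unfolding bounded_iff by blast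
  then obtain L \<sigma> where \<sigma>: "strict_mono \<sigma>" and L: "(X \<circ> \<sigma>) \<longlonglongrightarrow> L"
    using bounded_imp_convergent_subsequence by blast
  have det: "det ((X \<circ> \<sigma>) n) = 1" for n
    using det_Rep_psl[OF X[THEN conjunct1]] by (simp add: comp_def)
  have "(\<lambda>n. det ((X \<circ> \<sigma>) n)) \<longlonglongrightarrow> det L"
    unfolding det_2 by (intro tendsto_intros L)
  then have "det L = 1"
    using det by (simp add: LIMSEQ_const_iff)
  then have "(\<lambda>n. psl_of ((X \<circ> \<sigma>) n)) \<longlonglongrightarrow> psl_of L"
    using L det by (intro tendsto_psl_of)
  moreover have "psl_of ((X \<circ> \<sigma>) n) = (x \<circ> \<sigma>) n" for n
    using X psl_of_Rep_psl by (simp add: comp_def)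
  ultimately show ?thesis
    using that \<sigma> by (simp add: comp_def)
qed

section \<open>Discrete torsion-free groups\<close>

lemma DTF_one: "G \<in> DTF \<Longrightarrow> psl_one \<in> G"
  by (simp add: DTF_def psl_subgroup_def)

lemma DTF_mult: "G \<in> DTF \<Longrightarrow> x \<in> G \<Longrightarrow> y \<in> G \<Longrightarrow> psl_mult x y \<in> G"
  by (simp add: DTF_def psl_subgroup_def)

lemma DTF_inv: "G \<in> DTF \<Longrightarrow> x \<in> G \<Longrightarrow> psl_inv x \<in> G"
  by (simp add: DTF_def psl_subgroup_def)

lemma psl_pow_Suc: "psl_pow x (Suc n) = psl_mult x (psl_pow x n)"
  by (simp add: psl_pow_def)

lemma DTF_psl_pow: "G \<in> DTF \<Longrightarrow> x \<in> G \<Longrightarrow> psl_pow x n \<in> G"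
  by (induction n) (simp_all add: psl_pow_def DTF_one DTF_mult)

lemma DTF_isolated:
  assumes "G \<in> DTF" and "g \<in> G"
  obtains e where "e > 0" and "\<And>h. h \<in> G \<Longrightarrow> dist h g < e \<Longrightarrow> h = g"
proof -
  obtain U where U: "open U" "U \<inter> G = {g}"
    using assms by (auto simp: DTF_def psl_discrete_def psl_top_eq_euclidean)
  then obtain e where "e > 0" "\<And>y. dist y g < e \<Longrightarrow> y \<in> U"
    unfolding open_dist by blast
  with U(2) that show ?thesis
    by blast
qed

text \<open>A nontrivial element of a discrete torsion-free group has powers arbitrarily far from the
  identity: bounded powers would have a convergent subsequence, and the quotients of consecutive
  terms would be nontrivial powers converging to the identity.\<close>

lemma DTF_powers_escape:
  assumes G: "G \<in> DTF" and g: "g \<in> G" "g \<noteq> psl_one"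
  shows "\<exists>k. \<rho> \<le> dist (psl_pow g k) psl_one"
proof (rule ccontr)
  assume "\<not> ?thesis"
  then have "dist (psl_pow g k) psl_one \<le> \<rho>" for k
    by (simp add: not_le less_imp_le)
  then obtain l \<sigma> where \<sigma>: "strict_mono \<sigma>" and l: "((\<lambda>k. psl_pow g k) \<circ> \<sigma>) \<longlonglongrightarrow> l"
    by (rule psl_bounded_seq_has_convergent_subseq)
  define y where "y = (\<lambda>k. psl_pow g k) \<circ> \<sigma>"
  define d where "d n = psl_mult (psl_inv (y n)) (y (Suc n))" for n
  have "d \<longlonglongrightarrow> psl_mult (psl_inv l) l"
    unfolding d_def y_def by (intro tendsto_intros l LIMSEQ_Suc)
  then have "d \<longlonglongrightarrow> psl_one"
    by (simp add: psl_mult_inv_left)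
  moreover obtain e where e: "e > 0" "\<And>h. h \<in> G \<Longrightarrow> dist h psl_one < e \<Longrightarrow> h = psl_one"
    using G DTF_one[OF G] by (rule DTF_isolated) blast
  ultimately obtain N where N: "dist (d N) psl_one < e"
    using tendstoD eventually_sequentially by (metis order_refl)
  define m where "m = \<sigma> (Suc N) - \<sigma> N"
  have "\<sigma> N < \<sigma> (Suc N)"
    using \<sigma> by (simp add: strict_monoD)
  then have m: "m > 0" "\<sigma> (Suc N) = \<sigma> N + m"
    unfolding m_def by auto
  have "d N = psl_pow g m"
    unfolding d_def y_def using m(2)
    by (simp add: psl_pow_add psl_mult_inv_left psl_mult_one_left flip: psl_mult_assoc)
  moreover have "d N \<in> G"
    unfolding d_def y_def by (simp add: G g DTF_psl_pow DTF_mult DTF_inv)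
  ultimately have "psl_pow g m = psl_one"
    using e(2) N by simp
  then show False
    using G g m(1) by (auto simp: DTF_def psl_torsion_free_def)
qed

lemma DTF_first_escape:
  assumes G: "G \<in> DTF" and g: "g \<in> G" "g \<noteq> psl_one" and \<rho>: "\<rho> > 0"
  shows "\<exists>f\<in>G. dist f psl_one < \<rho> \<and> \<rho> \<le> dist (psl_mult g f) psl_one"
proof -
  define k where "k = (LEAST k. \<rho> \<le> dist (psl_pow g k) psl_one)"
  have k: "\<rho> \<le> dist (psl_pow g k) psl_one"
    unfolding k_def by (rule LeastI_ex[OF DTF_powers_escape[OF G g]])
  then obtain k' where k': "k = Suc k'"
    using \<rho> by (cases k) (simp_all add: psl_pow_def)
  have "\<not> \<rho> \<le> dist (psl_pow g k') psl_one"
    using k' unfolding k_def by (metis lessI not_less_Least)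
  then show ?thesis
    using k k' G g by (intro bexI[of _ "psl_pow g k'"]) (simp_all add: psl_pow_Suc DTF_psl_pow)
qed

section \<open>Paths in the Chabauty space\<close>

lemma D_path_DTF: "D_path \<Gamma> \<Longrightarrow> t \<in> {0..1} \<Longrightarrow> \<Gamma> t \<in> DTF"
  by (simp add: D_path_def)

lemma D_path_limit_mem:
  assumes "D_path \<Gamma>" and "t \<in> {0..1}" and "\<And>n. u n \<in> {0..1}" and "u \<longlonglongrightarrow> t"
    and "\<And>n. \<psi> n \<in> \<Gamma> (u n)" and "strict_mono \<sigma>" and "(\<psi> \<circ> \<sigma>) \<longlonglongrightarrow> l"
  shows "l \<in> \<Gamma> t"
proof -
  have "chabauty_lim (\<Gamma> \<circ> u) (\<Gamma> t)"
    using assms(1-4) unfolding D_path_def by blast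
  then show ?thesis
    using assms(5-7) unfolding chabauty_lim_def psl_top_eq_euclidean limitin_canonical_iff
    by (metis comp_apply)
qed

lemma LIMSEQ_dist_less_inverse_Suc:
  fixes x :: "nat \<Rightarrow> 'a::metric_space"
  assumes "\<And>n. dist (x n) a < inverse (real (Suc n))"
  shows "x \<longlonglongrightarrow> a"
proof -
  have "(\<lambda>n. dist (x n) a) \<longlonglongrightarrow> 0"
    using assms
    by (intro tendsto_sandwich[OF always_eventually always_eventually tendsto_const LIMSEQ_inverse_real_of_nat])
       (auto intro: less_imp_le)
  then show ?thesis
    by (rule tendsto_dist_iff[THEN iffD2])
qed

lemma D_path_uniformly_discrete:
  assumes D: "D_path \<Gamma>" and t: "t \<in> {0..1}"
  shows "\<exists>\<epsilon>>0. \<forall>u\<in>{0..1}. dist u t < \<epsilon> \<longrightarrow> (\<forall>g\<in>\<Gamma> u. dist g psl_one < \<epsilon> \<longrightarrow> g = psl_one)"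
proof (rule ccontr)
  assume "\<not> ?thesis"
  then have "\<forall>n. \<exists>u g. u \<in> {0..1} \<and> dist u t < inverse (real (Suc n)) \<and>
      g \<in> \<Gamma> u \<and> dist g psl_one < inverse (real (Suc n)) \<and> g \<noteq> psl_one"
    by (metis inverse_positive_iff_positive of_nat_0_less_iff zero_less_Suc)
  then obtain u g where u: "\<And>n. u n \<in> {0..1}" "\<And>n. dist (u n) t < inverse (real (Suc n))"
    and g: "\<And>n. g n \<in> \<Gamma> (u n)" "\<And>n. dist (g n) psl_one < inverse (real (Suc n))" "\<And>n. g n \<noteq> psl_one"
    by metis
  obtain r where r: "r > 0" "\<And>h. h \<in> \<Gamma> t \<Longrightarrow> dist h psl_one < r \<Longrightarrow> h = psl_one"
    using DTF_isolated[OF D_path_DTF[OF D t] DTF_one[OF D_path_DTF[OF D t]]] by blast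
  define \<rho> where "\<rho> = r / 2"
  have \<rho>: "\<rho> > 0" "\<rho> < r"
    using r by (auto simp: \<rho>_def)
  have "\<forall>n. \<exists>f. f \<in> \<Gamma> (u n) \<and> dist f psl_one < \<rho> \<and> \<rho> \<le> dist (psl_mult (g n) f) psl_one"
    using DTF_first_escape[OF D_path_DTF[OF D u(1)] g(1) g(3) \<rho>(1)] by blast
  then obtain f where f: "\<And>n. f n \<in> \<Gamma> (u n)" "\<And>n. dist (f n) psl_one < \<rho>"
    "\<And>n. \<rho> \<le> dist (psl_mult (g n) (f n)) psl_one"
    by metis
  have "dist (f n) psl_one \<le> \<rho>" for n
    using f(2) less_imp_le by blast
  then obtain l \<sigma> where \<sigma>: "strict_mono \<sigma>" and l: "(f \<circ> \<sigma>) \<longlonglongrightarrow> l"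
    by (rule psl_bounded_seq_has_convergent_subseq)
  define \<psi> where "\<psi> n = psl_mult (g n) (f n)" for n
  have "(g \<circ> \<sigma>) \<longlonglongrightarrow> psl_one"
    using LIMSEQ_dist_less_inverse_Suc[OF g(2)] \<sigma> by (rule LIMSEQ_subseq_LIMSEQ)
  from tendsto_psl_mult[OF this l] have \<psi>_lim: "(\<psi> \<circ> \<sigma>) \<longlonglongrightarrow> l"
    by (simp add: psl_mult_one_left \<psi>_def comp_def)
  have "l \<in> \<Gamma> t"
  proof (rule D_path_limit_mem[OF D t u(1) LIMSEQ_dist_less_inverse_Suc[OF u(2)] _ \<sigma> \<psi>_lim])
    show "\<psi> n \<in> \<Gamma> (u n)" for n
      unfolding \<psi>_def using D_path_DTF[OF D u(1)] g(1) f(1) by (rule DTF_mult)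
  qed
  moreover have "dist l psl_one \<le> \<rho>"
    using l f(2)
    by (intro tendsto_le[OF trivial_limit_sequentially tendsto_const tendsto_dist[OF l tendsto_const]])
       (auto simp: always_eventually less_imp_le)
  moreover have "\<rho> \<le> dist l psl_one"
    using f(3)
    by (intro tendsto_le[OF trivial_limit_sequentially tendsto_dist[OF \<psi>_lim tendsto_const] tendsto_const])
       (simp add: always_eventually \<psi>_def)
  ultimately show False
    using r(2) \<rho> by force
qed

section \<open>Uniqueness of \<open>\<Gamma>\<close>-paths and the maps \<open>J\<close>\<close>

lemma Gamma_path_continuous_on: "Gamma_path \<Gamma> s \<psi> I j \<Longrightarrow> continuous_on I j"
  by (simp add: Gamma_path_def psl_top_eq_euclidean)

lemma Gamma_path_rebase: "Gamma_path \<Gamma> s \<psi> I j \<Longrightarrow> t \<in> I \<Longrightarrow> Gamma_path \<Gamma> t (j t) I j"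
  by (simp add: Gamma_path_def)

lemma Gamma_path_mult:
  assumes D: "D_path \<Gamma>" and a: "Gamma_path \<Gamma> s a I j" and b: "Gamma_path \<Gamma> s b I' j'"
  shows "Gamma_path \<Gamma> s (psl_mult a b) (I \<inter> I') (\<lambda>v. psl_mult (j v) (j' v))"
proof -
  have "continuous_on (I \<inter> I') (\<lambda>v. psl_mult (j v) (j' v))"
    using Gamma_path_continuous_on[OF a] Gamma_path_continuous_on[OF b]
    by (intro continuous_on_psl_mult) (auto elim: continuous_on_subset)
  moreover have "psl_mult (j v) (j' v) \<in> \<Gamma> v" if "v \<in> I \<inter> I'" for v
  proof -
    have "v \<in> {0..1}" "j v \<in> \<Gamma> v" "j' v \<in> \<Gamma> v"
      using that a b by (auto simp: Gamma_path_def)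
    then show ?thesis
      by (intro DTF_mult D_path_DTF[OF D])
  qed
  ultimately show ?thesis
    using a b by (auto simp: Gamma_path_def psl_top_eq_euclidean is_interval_Int)
qed

lemma Gamma_path_inv:
  assumes D: "D_path \<Gamma>" and a: "Gamma_path \<Gamma> s a I j"
  shows "Gamma_path \<Gamma> s (psl_inv a) I (\<lambda>v. psl_inv (j v))"
proof -
  have "continuous_on I (\<lambda>v. psl_inv (j v))"
    using Gamma_path_continuous_on[OF a] by (rule continuous_on_psl_inv)
  moreover have "psl_inv (j v) \<in> \<Gamma> v" if "v \<in> I" for v
  proof -
    have "v \<in> {0..1}" "j v \<in> \<Gamma> v"
      using that a by (auto simp: Gamma_path_def)
    then show ?thesis
      by (intro DTF_inv D_path_DTF[OF D])
  qed
  ultimately show ?thesis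
    using a by (auto simp: Gamma_path_def psl_top_eq_euclidean)
qed

lemma Gamma_path_through_one:
  assumes D: "D_path \<Gamma>" and p: "Gamma_path \<Gamma> s psl_one I j" and u: "u \<in> I"
  shows "j u = psl_one"
proof -
  define T where "T = {v \<in> I. j v = psl_one}"
  have I: "connected I" "I \<subseteq> {0..1}" "s \<in> I" "\<And>v. v \<in> I \<Longrightarrow> j v \<in> \<Gamma> v"
    using p by (auto simp: Gamma_path_def is_interval_connected)
  have cont: "continuous_on I j"
    using p by (rule Gamma_path_continuous_on)
  have "closedin (top_of_set I) T"
    unfolding T_def using cont by (rule continuous_closedin_preimage_constant)
  moreover have "openin (top_of_set I) T"
    unfolding openin_euclidean_subtopology_iff
  proof (intro conjI ballI)
    fix v assume "v \<in> T"
    then have v: "v \<in> I" "j v = psl_one"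
      by (auto simp: T_def)
    obtain \<epsilon> where \<epsilon>: "\<epsilon> > 0"
      "\<And>w g. w \<in> {0..1} \<Longrightarrow> dist w v < \<epsilon> \<Longrightarrow> g \<in> \<Gamma> w \<Longrightarrow> dist g psl_one < \<epsilon> \<Longrightarrow> g = psl_one"
      using D_path_uniformly_discrete[OF D] v(1) I(2) by blast
    obtain \<delta> where \<delta>: "\<delta> > 0" "\<And>w. w \<in> I \<Longrightarrow> dist w v < \<delta> \<Longrightarrow> dist (j w) (j v) < \<epsilon>"
      using cont v(1) \<epsilon>(1) unfolding continuous_on_iff by blast
    have "w \<in> T" if "w \<in> I" "dist w v < min \<delta> \<epsilon>" for w
      using that \<epsilon>(2)[of w "j w"] \<delta>(2)[of w] I(2,4) v(2) by (auto simp: T_def)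
    then show "\<exists>e>0. \<forall>w\<in>I. dist w v < e \<longrightarrow> w \<in> T"
      using \<epsilon>(1) \<delta>(1) by (intro exI[of _ "min \<delta> \<epsilon>"]) auto
  qed (auto simp: T_def)
  moreover have "s \<in> T"
    using p by (simp add: T_def Gamma_path_def)
  ultimately have "T = I"
    using I(1) unfolding connected_clopen by blast
  with u show ?thesis
    by (auto simp: T_def)
qed

lemma Gamma_path_unique:
  assumes D: "D_path \<Gamma>" and p: "Gamma_path \<Gamma> s \<psi> I j" and p': "Gamma_path \<Gamma> s \<psi> I' j'"
    and "u \<in> I" and "u \<in> I'"
  shows "j u = j' u"
proof -
  have "Gamma_path \<Gamma> s psl_one (I \<inter> I') (\<lambda>v. psl_mult (j v) (psl_inv (j' v)))"
    using Gamma_path_mult[OF D p Gamma_path_inv[OF D p']] by (simp add: psl_mult_inv_right)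
  from Gamma_path_through_one[OF D this] have "psl_mult (j u) (psl_inv (j' u)) = psl_one"
    using assms(4,5) by simp
  then show ?thesis
    by (rule psl_mult_inv_eq_one_imp_eq)
qed

lemma mem_Imax_iff: "t \<in> Imax \<Gamma> s \<psi> \<longleftrightarrow> (\<exists>I j. Gamma_path \<Gamma> s \<psi> I j \<and> t \<in> I)"
  by (auto simp: Imax_def)

lemma J_eq_None_iff: "J \<Gamma> s t \<psi> = None \<longleftrightarrow> t \<notin> Imax \<Gamma> s \<psi>"
  by (simp add: J_def)

lemma J_eq_Some:
  assumes D: "D_path \<Gamma>" and p: "Gamma_path \<Gamma> s \<psi> I j" and t: "t \<in> I"
  shows "J \<Gamma> s t \<psi> = Some (j t)"
proof -
  have "(THE g. \<exists>I j. Gamma_path \<Gamma> s \<psi> I j \<and> t \<in> I \<and> j t = g) = j t"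
    using p t Gamma_path_unique[OF D _ p _ t] by (intro the_equality) blast+
  moreover have "t \<in> Imax \<Gamma> s \<psi>"
    using p t by (auto simp: mem_Imax_iff)
  ultimately show ?thesis
    by (simp add: J_def)
qed

lemma J_mult:
  assumes D: "D_path \<Gamma>" and "t \<in> Imax \<Gamma> s a" and "t \<in> Imax \<Gamma> s b"
  shows "J \<Gamma> s t (psl_mult a b) = Some (psl_mult (the (J \<Gamma> s t a)) (the (J \<Gamma> s t b)))"
proof -
  obtain I j I' j' where a: "Gamma_path \<Gamma> s a I j" "t \<in> I" and b: "Gamma_path \<Gamma> s b I' j'" "t \<in> I'"
    using assms(2,3) by (auto simp: mem_Imax_iff)
  then show ?thesis
    using J_eq_Some[OF D Gamma_path_mult[OF D a(1) b(1)]] J_eq_Some[OF D a] J_eq_Some[OF D b] by simp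
qed

lemma J_inj:
  assumes D: "D_path \<Gamma>" and "t \<in> Imax \<Gamma> s a" and "t \<in> Imax \<Gamma> s b"
    and eq: "the (J \<Gamma> s t a) = the (J \<Gamma> s t b)"
  shows "a = b"
proof -
  obtain I j I' j' where a: "Gamma_path \<Gamma> s a I j" "t \<in> I" and b: "Gamma_path \<Gamma> s b I' j'" "t \<in> I'"
    using assms(2,3) by (auto simp: mem_Imax_iff)
  have "Gamma_path \<Gamma> t (j t) I' j'"
    using Gamma_path_rebase[OF b] eq J_eq_Some[OF D a] J_eq_Some[OF D b] by simp
  then have "j s = j' s"
    using Gamma_path_unique[OF D Gamma_path_rebase[OF a]] a b by (auto simp: Gamma_path_def)
  with a b show ?thesis
    by (simp add: Gamma_path_def)
qed

theorem mainTheorem11: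
  fixes \<Gamma> :: "real \<Rightarrow> psl2c set" and s t :: real and H :: "psl2c set"
  assumes "D_path \<Gamma>"
    and "s \<in> {0..1}" and "t \<in> {0..1}"
    and "psl_subgroup H" and "H \<subseteq> \<Gamma> s"
  shows "((\<forall>\<psi>\<in>H. J \<Gamma> s t \<psi> \<noteq> None) \<longleftrightarrow>
          ((\<forall>\<psi>\<in>H. J \<Gamma> s t \<psi> \<noteq> None) \<and> inj_on (\<lambda>\<psi>. the (J \<Gamma> s t \<psi>)) H \<and>
           (\<forall>a\<in>H. \<forall>b\<in>H. the (J \<Gamma> s t (psl_mult a b)) = psl_mult (the (J \<Gamma> s t a)) (the (J \<Gamma> s t b)))))
     \<and> ((\<forall>\<psi>\<in>H. J \<Gamma> s t \<psi> \<noteq> None) \<longleftrightarrow> (\<forall>\<psi>\<in>H. t \<in> Imax \<Gamma> s \<psi>))"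
proof -
  have defined: "(\<forall>\<psi>\<in>H. J \<Gamma> s t \<psi> \<noteq> None) \<longleftrightarrow> (\<forall>\<psi>\<in>H. t \<in> Imax \<Gamma> s \<psi>)"
    by (simp add: J_eq_None_iff)
  have "inj_on (\<lambda>\<psi>. the (J \<Gamma> s t \<psi>)) H" if "\<forall>\<psi>\<in>H. t \<in> Imax \<Gamma> s \<psi>"
    using that J_inj[OF assms(1)] by (intro inj_onI) blast
  moreover have "the (J \<Gamma> s t (psl_mult a b)) = psl_mult (the (J \<Gamma> s t a)) (the (J \<Gamma> s t b))"
    if "\<forall>\<psi>\<in>H. t \<in> Imax \<Gamma> s \<psi>" and "a \<in> H" and "b \<in> H" for a b
    using that J_mult[OF assms(1)] by simp
  ultimately show ?thesis
    using defined by blast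
qed

end
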